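(* An algebra $\mathbf{A}$ has a minority term if and only if it has a Maltsev term and a minority-majority term.
   Context: A ternary term $m(x,y,z)$ of an algebra $\mathbf{A}$ is a minority term if its interpretation on $A$ satisfies the identities $m(y,x,x)\approx m(x,y,x)\approx m(x,x,y)\approx y$. A ternary term $p(x,y,z)$ of $\mathbf{A}$ is a Maltsev term if $p(x,x,y)\approx p(y,x,x)\approx y$ holds in $\mathbf{A}$. A 6-ary term $t(x_1,\dots,x_6)$ of $\mathbf{A}$ is a minority-majority term if $\mathbf{A}$ satisfies $t(y,x,x,z,y,y)\approx y$, $t(x,y,x,y,z,y)\approx y$, and $t(x,x,y,y,y,z)\approx y$. *)

theory Defs
  imports Main
begin

text \<open>A (finitary) algebra is given by a nonempty carrier A,
  an arity function ar on an arbitrary set of operation symbols 'f, and interpretations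
  F f :: 'a list => 'a (meaningful on lists of length ar f), closed on A.\<close>

datatype 'f trm = Var nat | Fn 'f "'f trm list"

fun eval :: "('f \<Rightarrow> 'a list \<Rightarrow> 'a) \<Rightarrow> (nat \<Rightarrow> 'a) \<Rightarrow> 'f trm \<Rightarrow> 'a" where
  "eval F v (Var i) = v i"
| "eval F v (Fn f ts) = F f (map (eval F v) ts)"

fun wf_trm :: "('f \<Rightarrow> nat) \<Rightarrow> nat \<Rightarrow> 'f trm \<Rightarrow> bool" where
  "wf_trm ar n (Var i) = (i < n)"
| "wf_trm ar n (Fn f ts) = (length ts = ar f \<and> (\<forall>t\<in>set ts. wf_trm ar n t))"

definition algebra :: "'a set \<Rightarrow> ('f \<Rightarrow> nat) \<Rightarrow> ('f \<Rightarrow> 'a list \<Rightarrow> 'a) \<Rightarrow> bool" where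
  "algebra A ar F \<longleftrightarrow> A \<noteq> {} \<and>
     (\<forall>f xs. length xs = ar f \<and> set xs \<subseteq> A \<longrightarrow> F f xs \<in> A)"

definition term_op :: "('f \<Rightarrow> 'a list \<Rightarrow> 'a) \<Rightarrow> 'f trm \<Rightarrow> 'a list \<Rightarrow> 'a" where
  "term_op F t xs = eval F (\<lambda>i. xs ! i) t"

definition has_minority_term :: "'a set \<Rightarrow> ('f \<Rightarrow> nat) \<Rightarrow> ('f \<Rightarrow> 'a list \<Rightarrow> 'a) \<Rightarrow> bool" where
  "has_minority_term A ar F \<longleftrightarrow> (\<exists>m. wf_trm ar 3 m \<and>
     (\<forall>x\<in>A. \<forall>y\<in>A.
        term_op F m [y,x,x] = y \<and> term_op F m [x,y,x] = y \<and> term_op F m [x,x,y] = y))"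

definition has_maltsev_term :: "'a set \<Rightarrow> ('f \<Rightarrow> nat) \<Rightarrow> ('f \<Rightarrow> 'a list \<Rightarrow> 'a) \<Rightarrow> bool" where
  "has_maltsev_term A ar F \<longleftrightarrow> (\<exists>p. wf_trm ar 3 p \<and>
     (\<forall>x\<in>A. \<forall>y\<in>A. term_op F p [x,x,y] = y \<and> term_op F p [y,x,x] = y))"

definition has_minority_majority_term :: "'a set \<Rightarrow> ('f \<Rightarrow> nat) \<Rightarrow> ('f \<Rightarrow> 'a list \<Rightarrow> 'a) \<Rightarrow> bool" where
  "has_minority_majority_term A ar F \<longleftrightarrow> (\<exists>t. wf_trm ar 6 t \<and>
     (\<forall>x\<in>A. \<forall>y\<in>A. \<forall>z\<in>A.
        term_op F t [y,x,x,z,y,y] = y \<and> term_op F t [x,y,x,y,z,y] = y \<and>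
        term_op F t [x,x,y,y,y,z] = y))"

end

theory Submission
  imports Defs
begin

text \<open>A minority term is in particular a Maltsev term, and it is a minority-majority term
  that ignores its last three arguments. Conversely, from a Maltsev term \<open>p\<close> and a
  minority-majority term \<open>t\<close> one obtains the minority term
  \<open>m(x,y,z) = t(x, y, z, p(y,x,z), p(x,y,z), p(x,z,y))\<close>: in each of the three minority
  identities the Maltsev identities collapse two of the three \<open>p\<close>-arguments to the
  minority value, and the remaining one plays the role of the free variable \<open>z\<close> of
  the corresponding minority-majority identity.\<close>

fun subst :: "(nat \<Rightarrow> 'f trm) \<Rightarrow> 'f trm \<Rightarrow> 'f trm" where
  "subst s (Var i) = s i"
| "subst s (Fn f ts) = Fn f (map (subst s) ts)"

lemma eval_subst: "eval F v (subst s t) = eval F (\<lambda>i. eval F v (s i)) t"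
  by (induction t) (auto cong: map_cong)

lemma wf_trm_subst:
  "wf_trm ar n t \<Longrightarrow> (\<And>i. i < n \<Longrightarrow> wf_trm ar k (s i)) \<Longrightarrow> wf_trm ar k (subst s t)"
  by (induction t) auto

lemma wf_trm_mono: "wf_trm ar n t \<Longrightarrow> n \<le> k \<Longrightarrow> wf_trm ar k t"
  by (induction t) auto

lemma eval_cong_wf_trm:
  "wf_trm ar n t \<Longrightarrow> (\<And>i. i < n \<Longrightarrow> v i = w i) \<Longrightarrow> eval F v t = eval F w t"
  by (induction t) (auto intro!: arg_cong[where f = "F _"] map_cong)

lemma eval_in_carrier:
  assumes "algebra A ar F" and "wf_trm ar n t" and "\<And>i. i < n \<Longrightarrow> v i \<in> A"
  shows "eval F v t \<in> A"
  using assms(2)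
proof (induction t)
  case (Fn f ts)
  then have "set (map (eval F v) ts) \<subseteq> A" and "length (map (eval F v) ts) = ar f"
    by auto
  with assms(1) show ?case
    unfolding algebra_def by simp
qed (use assms(3) in auto)

lemma term_op_in_carrier:
  "algebra A ar F \<Longrightarrow> wf_trm ar n t \<Longrightarrow> length xs = n \<Longrightarrow> set xs \<subseteq> A \<Longrightarrow> term_op F t xs \<in> A"
  unfolding term_op_def by (rule eval_in_carrier) auto

lemma term_op_append:
  "wf_trm ar n t \<Longrightarrow> length xs = n \<Longrightarrow> term_op F t (xs @ ys) = term_op F t xs"
  unfolding term_op_def by (rule eval_cong_wf_trm) (auto simp: nth_append)

lemma wf_trm_subst_nth:
  "wf_trm ar n t \<Longrightarrow> length ss = n \<Longrightarrow> (\<And>s. s \<in> set ss \<Longrightarrow> wf_trm ar k s) \<Longrightarrow>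
    wf_trm ar k (subst ((!) ss) t)"
  by (rule wf_trm_subst) auto

lemma term_op_subst_nth:
  "wf_trm ar n t \<Longrightarrow> length ss = n \<Longrightarrow>
    term_op F (subst ((!) ss) t) xs = term_op F t (map (\<lambda>s. term_op F s xs) ss)"
  unfolding term_op_def eval_subst by (rule eval_cong_wf_trm) auto

lemma term_op_Var: "term_op F (Var i) xs = xs ! i"
  by (simp add: term_op_def)

lemma minority_imp_minority_majority:
  assumes "has_minority_term A ar F"
  shows "has_minority_majority_term A ar F"
proof -
  obtain m where wf: "wf_trm ar 3 m" and minority: "\<forall>x\<in>A. \<forall>y\<in>A.
      term_op F m [y,x,x] = y \<and> term_op F m [x,y,x] = y \<and> term_op F m [x,x,y] = y"
    using assms unfolding has_minority_term_def by blast
  have first3: "term_op F m ([a,b,c] @ rest) = term_op F m [a,b,c]" for a b c rest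
    by (rule term_op_append[OF wf]) simp
  show ?thesis
    unfolding has_minority_majority_term_def
  proof (intro exI conjI ballI)
    show "wf_trm ar 6 m"
      using wf by (rule wf_trm_mono) simp
    fix x y z assume "x \<in> A" "y \<in> A" "z \<in> A"
    then show "term_op F m [y,x,x,z,y,y] = y" "term_op F m [x,y,x,y,z,y] = y"
      "term_op F m [x,x,y,y,y,z] = y"
      using minority first3[of _ _ _ "[_,_,_]"] by simp_all
  qed
qed

lemma maltsev_minority_majority_imp_minority:
  assumes alg: "algebra A ar F"
    and "has_maltsev_term A ar F" and "has_minority_majority_term A ar F"
  shows "has_minority_term A ar F"
proof -
  obtain p where wf_p: "wf_trm ar 3 p" and maltsev: "\<forall>x\<in>A. \<forall>y\<in>A.
      term_op F p [x,x,y] = y \<and> term_op F p [y,x,x] = y"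
    using assms(2) unfolding has_maltsev_term_def by blast
  obtain t where wf_t: "wf_trm ar 6 t" and mm: "\<forall>x\<in>A. \<forall>y\<in>A. \<forall>z\<in>A.
      term_op F t [y,x,x,z,y,y] = y \<and> term_op F t [x,y,x,y,z,y] = y \<and>
      term_op F t [x,x,y,y,y,z] = y"
    using assms(3) unfolding has_minority_majority_term_def by blast
  define P where "P a b c = subst ((!) [Var a, Var b, Var c]) p" for a b c :: nat
  define m where "m = subst ((!) [Var 0, Var 1, Var 2, P 1 0 2, P 0 1 2, P 0 2 1]) t"
  have wf_P: "a < 3 \<Longrightarrow> b < 3 \<Longrightarrow> c < 3 \<Longrightarrow> wf_trm ar 3 (P a b c)" for a b c
    unfolding P_def by (rule wf_trm_subst_nth[OF wf_p]) auto
  have wf_m: "wf_trm ar 3 m"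
    unfolding m_def by (rule wf_trm_subst_nth[OF wf_t]) (auto simp: wf_P)
  have P_op: "term_op F (P a b c) xs = term_op F p [xs ! a, xs ! b, xs ! c]" for a b c xs
    unfolding P_def using wf_p by (simp add: term_op_subst_nth term_op_Var)
  have m_op: "term_op F m [x,y,z] =
      term_op F t [x, y, z, term_op F p [y,x,z], term_op F p [x,y,z], term_op F p [x,z,y]]"
    for x y z
    unfolding m_def using wf_t by (simp add: term_op_subst_nth term_op_Var P_op)
  have p_in: "x \<in> A \<Longrightarrow> y \<in> A \<Longrightarrow> z \<in> A \<Longrightarrow> term_op F p [x,y,z] \<in> A" for x y z
    by (rule term_op_in_carrier[OF alg wf_p]) auto
  show ?thesis
    unfolding has_minority_term_def
  proof (intro exI conjI ballI, fact wf_m)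
    fix x y assume "x \<in> A" "y \<in> A"
    then show "term_op F m [y,x,x] = y" "term_op F m [x,y,x] = y" "term_op F m [x,x,y] = y"
      using m_op maltsev mm p_in by auto
  qed
qed

theorem theorem3p1:
  fixes A :: "'a set" and ar :: "'f \<Rightarrow> nat" and F :: "'f \<Rightarrow> 'a list \<Rightarrow> 'a"
  assumes "algebra A ar F"
  shows "has_minority_term A ar F \<longleftrightarrow>
           has_maltsev_term A ar F \<and> has_minority_majority_term A ar F"
proof
  assume minority: "has_minority_term A ar F"
  then have "has_maltsev_term A ar F"
    unfolding has_minority_term_def has_maltsev_term_def by blast
  with minority_imp_minority_majority[OF minority]
  show "has_maltsev_term A ar F \<and> has_minority_majority_term A ar F" by blast
next
  assume "has_maltsev_term A ar F \<and> has_minority_majority_term A ar F"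
  with assms show "has_minority_term A ar F"
    using maltsev_minority_majority_imp_minority by blast
qed

end
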